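(* Let $k\ge2$ and $\exp_k(x)=\sum_{T\in\mathbb P}\alpha_Tx^T$. For every $T\in\mathbb P$ with $\deg(T)=n$ and every integer $m\ge0$, $$\frac{\alpha_T}{m!}=\sum_{U\in\mathbb P,\ \deg(U)=n+m}(U/T)\,\alpha_U .$$
   Context: Let $\mathbb P$ denote the set of finite planar reduced rooted trees (children of each vertex linearly ordered, no vertex with exactly one child), including the empty tree $\mathbf 1$ and the one-vertex tree $|$; $\deg(T)$ is the number of leaves, $L(T)$ the set of leaves. The algebra $\mathbb C\{x\}_{\mathbb P}$ has basis $\{x^T\}$, $x^{\mathbf 1}=1$, $x^|=x$, with $k$-linear operations $\omega_k$ ($k\ge2$), $\omega_k(x^{T_1},\dots,x^{T_k})=x^T$ where $T$ is obtained by attaching the nonempty $T_i$ in order as subtrees of the children of a new root (if exactly one is nonempty, $T$ is that one; if none, $T=\mathbf 1$). $\mathbb C\{\{x\}\}_{\mathbb P}$ is the algebra of formal series $\sum_T\gamma_Tx^T$. For $f=\sum\gamma_Tx^T$ and $c\in\mathbb C$, $f(cx)=\sum\gamma_Tc^{\deg T}x^T$. The $k$-ary exponential series $\exp_k(x)$ is the unique $f\in\mathbb C\{\{x\}\}_{\mathbb P}$ with $f=1+x+(\text{terms of degree}\ge2)$ and $\omega_k(f,\dots,f)=f(kx)$. Contraction $S|I$ for $I\subseteq L(S)$: the tree obtained from the subtree of $S$ spanned by the root-to-leaf paths to leaves in $I$ by suppressing all vertices with exactly one child; planar binomial coefficient $(S/T)=\#\{I\subseteq L(S):S|I=T\}$.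 *)

theory Defs
  imports Complex_Main
begin

text \<open>Planar rooted trees: a leaf, or an internal vertex with an ordered list of children.
  The empty tree 1 is represented by None in ptree option; a nonempty tree t by Some t.\<close>

datatype ptree = Leaf | Node "ptree list"

fun reduced :: "ptree \<Rightarrow> bool" where
  "reduced Leaf = True"
| "reduced (Node cs) = (2 \<le> length cs \<and> (\<forall>c\<in>set cs. reduced c))"

definition PT :: "ptree option set" where
  "PT = insert None (Some ` {t. reduced t})"

fun nleaves :: "ptree \<Rightarrow> nat" where
  "nleaves Leaf = 1"
| "nleaves (Node cs) = sum_list (map nleaves cs)"

definition deg :: "ptree option \<Rightarrow> nat" where
  "deg T = (case T of None \<Rightarrow> 0 | Some t \<Rightarrow> nleaves t)"

definition graft :: "ptree option list \<Rightarrow> ptree option" where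
  "graft ts = (let ne = [t. Some t \<leftarrow> ts] in
     (case ne of [] \<Rightarrow> None | [t] \<Rightarrow> Some t | _ \<Rightarrow> Some (Node ne)))"

text \<open>Formal series in C{{x}}_P: coefficient functions (coefficients outside P are required
  to vanish where relevant).\<close>
type_synonym series = "ptree option \<Rightarrow> complex"

text \<open>The k-ary operation omega_k, extended multilinearly to formal series
  (coefficient of x^T is a finite sum).\<close>
definition omega :: "nat \<Rightarrow> (nat \<Rightarrow> series) \<Rightarrow> series" where
  "omega k fs T = (\<Sum>ts\<in>{ts. length ts = k \<and> set ts \<subseteq> PT \<and> graft ts = T}.
                     \<Prod>i<k. fs i (ts ! i))"

text \<open>f(cx).\<close>
definition scale :: "complex \<Rightarrow> series \<Rightarrow> series" where
  "scale c f T = c ^ deg T * f T"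

definition exp_k :: "nat \<Rightarrow> series" where
  "exp_k k = (THE f. (\<forall>T. T \<notin> PT \<longrightarrow> f T = 0) \<and> f None = 1 \<and> f (Some Leaf) = 1 \<and>
                     (\<forall>T\<in>PT. omega k (\<lambda>_. f) T = scale (of_nat k) f T))"

text \<open>Leaves are addressed by paths (lists of child indices) from the root.\<close>
fun leaves :: "ptree \<Rightarrow> nat list set"
and leaves_list :: "nat \<Rightarrow> ptree list \<Rightarrow> nat list set" where
  "leaves Leaf = {[]}"
| "leaves (Node cs) = leaves_list 0 cs"
| "leaves_list i [] = {}"
| "leaves_list i (c # cs) = ((#) i ` leaves c) \<union> leaves_list (Suc i) cs"

definition L :: "ptree option \<Rightarrow> nat list set" where
  "L T = (case T of None \<Rightarrow> {} | Some t \<Rightarrow> leaves t)"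

fun restr :: "ptree \<Rightarrow> nat list set \<Rightarrow> ptree option"
and restr_list :: "nat \<Rightarrow> ptree list \<Rightarrow> nat list set \<Rightarrow> ptree option list" where
  "restr Leaf I = (if [] \<in> I then Some Leaf else None)"
| "restr (Node cs) I = graft (restr_list 0 cs I)"
| "restr_list i [] I = []"
| "restr_list i (c # cs) I = restr c {p. i # p \<in> I} # restr_list (Suc i) cs I"

definition contract :: "ptree option \<Rightarrow> nat list set \<Rightarrow> ptree option" where
  "contract S I = (case S of None \<Rightarrow> None | Some s \<Rightarrow> restr s I)"

definition pbinom :: "ptree option \<Rightarrow> ptree option \<Rightarrow> nat" where
  "pbinom S T = card {I. I \<subseteq> L S \<and> contract S I = T}"

end

theory Submission
  imports Defs
begin

text \<open>Both sides of the identity are coefficients of \<open>x\<^sup>T y\<^sup>m\<close> in a series in \<open>x\<close> and an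
  extra commuting variable \<open>y\<close>: the left side of \<open>exp\<^sub>k(x) e\<^sup>y\<close>, the right side of
  \<open>exp\<^sub>k(x + y)\<close>, where \<open>(x + y)\<^sup>U\<close> is the sum over \<open>I \<subseteq> L U\<close> of
  \<open>x\<^bsup>U|I\<^esup> y\<^bsup>deg U - |I|\<^esup>\<close>. Both series \<open>H\<close> satisfy \<open>\<omega>\<^sub>k(H, \<dots>, H) = H(kx, ky)\<close>:
  the first by the multinomial theorem, the second because contraction commutes with grafting,
  so that choosing leaves of a graft is the same as choosing leaves of each grafted tree.
  Comparing coefficients of \<open>x\<^sup>T y\<^sup>m\<close> in this equation expresses \<open>(k\<^sup>N - k) H T m\<close>,
  \<open>N = deg T + m\<close>, through coefficients of smaller total degree, so the equation together
  with the coefficients of \<open>1\<close>, \<open>x\<close> and \<open>y\<close> determines \<open>H\<close>. The same argument in \<open>x\<close> alone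
  gives the recursion for the coefficients of \<open>exp\<^sub>k\<close>, which shows that the series
  described in its definition exists.\<close>

section \<open>Planar trees and grafting\<close>

lemma None_in_PT [simp]: "None \<in> PT"
  by (simp add: PT_def)

lemma Some_in_PT_iff [simp]: "Some t \<in> PT \<longleftrightarrow> reduced t"
  by (auto simp: PT_def)

lemma deg_None [simp]: "deg None = 0"
  and deg_Some [simp]: "deg (Some t) = nleaves t"
  by (simp_all add: deg_def)

lemma L_None [simp]: "L None = {}"
  and L_Some [simp]: "L (Some t) = leaves t"
  by (simp_all add: L_def)

lemma contract_None [simp]: "contract None I = None"
  and contract_Some [simp]: "contract (Some t) I = restr t I"
  by (simp_all add: contract_def)

lemma nleaves_pos: "reduced t \<Longrightarrow> 0 < nleaves t"
proof (induction t)
  case (Node cs)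
  then obtain c cs' where "cs = c # cs'"
    by (cases cs) auto
  with Node show ?case
    by auto
qed simp

lemma nleaves_Node_ge_2:
  assumes "reduced (Node cs)"
  shows "2 \<le> nleaves (Node cs)"
proof -
  obtain a b cs' where cs: "cs = a # b # cs'"
    using assms by (cases cs; cases "tl cs") auto
  with assms have "0 < nleaves a" "0 < nleaves b"
    by (auto intro: nleaves_pos)
  with cs show ?thesis
    by simp
qed

lemma deg_eq_0_iff: "T \<in> PT \<Longrightarrow> deg T = 0 \<longleftrightarrow> T = None"
  by (cases T) (auto dest: nleaves_pos)

lemma deg_eq_1_iff:
  assumes "T \<in> PT"
  shows "deg T = 1 \<longleftrightarrow> T = Some Leaf"
proof (cases T)
  case (Some t)
  with assms show ?thesis
    using nleaves_Node_ge_2 by (cases t) fastforce+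
qed simp

lemma length_le_nleaves:
  assumes "reduced (Node cs)"
  shows "length cs \<le> nleaves (Node cs)"
proof -
  have "(\<Sum>c\<leftarrow>cs. 1) \<le> (\<Sum>c\<leftarrow>cs. nleaves c)"
    using assms by (intro sum_list_mono) (auto simp: Suc_le_eq nleaves_pos)
  then show ?thesis
    by (simp add: sum_list_triv)
qed

lemma nleaves_child_less:
  assumes "reduced (Node cs)" and "c \<in> set cs"
  shows "nleaves c < nleaves (Node cs)"
proof -
  obtain xs ys where cs: "cs = xs @ c # ys"
    using assms(2) by (metis split_list)
  with assms(1) obtain d where d: "d \<in> set (xs @ ys)"
    by (cases "xs @ ys") auto
  with assms(1) cs have "0 < nleaves d"
    by (auto intro: nleaves_pos)
  moreover have "nleaves d \<le> (\<Sum>c\<leftarrow>xs @ ys. nleaves c)"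
    using d by (intro member_le_sum_list) auto
  ultimately show ?thesis
    using cs by auto
qed

lemma finite_reduced_nleaves_le: "finite {t. reduced t \<and> nleaves t \<le> N}"
proof (induction N)
  case 0
  have "{t. reduced t \<and> nleaves t \<le> 0} = {}"
    using nleaves_pos by fastforce
  then show ?case
    by (metis finite.emptyI)
next
  case (Suc N)
  let ?S = "{t. reduced t \<and> nleaves t \<le> N}"
  have "{t. reduced t \<and> nleaves t \<le> Suc N} \<subseteq>
      insert Leaf (Node ` {cs. set cs \<subseteq> ?S \<and> length cs \<le> Suc N})"
  proof
    fix t
    assume t: "t \<in> {t. reduced t \<and> nleaves t \<le> Suc N}"
    show "t \<in> insert Leaf (Node ` {cs. set cs \<subseteq> ?S \<and> length cs \<le> Suc N})"
    proof (cases t)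
      case (Node cs)
      with t have "set cs \<subseteq> ?S" and "length cs \<le> Suc N"
        using nleaves_child_less[of cs] length_le_nleaves[of cs] by fastforce+
      with Node show ?thesis
        by blast
    qed simp
  qed
  moreover have "finite {cs. set cs \<subseteq> ?S \<and> length cs \<le> Suc N}"
    using Suc.IH by (rule finite_lists_length_le)
  ultimately show ?case
    by (rule finite_subset[OF _ finite_insert[THEN iffD2, OF finite_imageI]])
qed

lemma finite_PT_deg_le: "finite {U \<in> PT. deg U \<le> N}"
proof (rule finite_subset)
  show "{U \<in> PT. deg U \<le> N} \<subseteq> insert None (Some ` {t. reduced t \<and> nleaves t \<le> N})"
    by (auto simp: PT_def)
qed (simp add: finite_reduced_nleaves_le)

lemma finite_PT_deg_eq: "finite {U \<in> PT. deg U = N}"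
  by (rule finite_subset[OF _ finite_PT_deg_le[of N]]) auto

definition trees :: "ptree option list \<Rightarrow> ptree list" where
  "trees ts = [t. Some t \<leftarrow> ts]"

lemma trees_simps [simp]:
  "trees [] = []" "trees (None # ts) = trees ts" "trees (Some t # ts) = t # trees ts"
  "trees (xs @ ys) = trees xs @ trees ys"
  by (simp_all add: trees_def)

lemma graft_eq_trees:
  "graft ts = (case trees ts of [] \<Rightarrow> None | [t] \<Rightarrow> Some t | _ \<Rightarrow> Some (Node (trees ts)))"
  unfolding graft_def trees_def Let_def ..

lemma graft_cong: "trees ts = trees ts' \<Longrightarrow> graft ts = graft ts'"
  unfolding graft_eq_trees by (rule arg_cong)

lemma graft_singleton [simp]: "graft [T] = T"
  by (cases T) (simp_all add: graft_eq_trees)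

lemma graft_eq_None_iff: "graft ts = None \<longleftrightarrow> trees ts = []"
  unfolding graft_eq_trees by (cases "trees ts" rule: remdups_adj.cases) auto

lemma graft_eq_Some_iff:
  "graft ts = Some t \<longleftrightarrow> trees ts = [t] \<or> (t = Node (trees ts) \<and> 2 \<le> length (trees ts))"
  unfolding graft_eq_trees by (cases "trees ts" rule: remdups_adj.cases) auto

lemma graft_eq_Node: "2 \<le> length (trees ts) \<Longrightarrow> graft ts = Some (Node (trees ts))"
  by (simp add: graft_eq_Some_iff)

lemma sum_deg_eq_sum_nleaves_trees: "(\<Sum>t\<leftarrow>ts. deg t) = (\<Sum>t\<leftarrow>trees ts. nleaves t)"
proof (induction ts)
  case (Cons a ts)
  then show ?case
    by (cases a) auto
qed simp

lemma deg_graft: "deg (graft ts) = (\<Sum>t\<leftarrow>ts. deg t)"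
  unfolding graft_eq_trees sum_deg_eq_sum_nleaves_trees by (auto split: list.split)

lemma set_subset_PT_iff: "set ts \<subseteq> PT \<longleftrightarrow> (\<forall>t\<in>set (trees ts). reduced t)"
proof (induction ts)
  case (Cons a ts)
  then show ?case
    by (cases a) auto
qed simp

lemma graft_in_PT: "set ts \<subseteq> PT \<Longrightarrow> graft ts \<in> PT"
  unfolding graft_eq_trees set_subset_PT_iff by (auto split: list.split)

lemma Some_in_set_iff: "Some t \<in> set ts \<longleftrightarrow> t \<in> set (trees ts)"
  by (auto simp: trees_def)

lemma filter_neq_None: "filter (\<lambda>t. t \<noteq> None) ts = map Some (trees ts)"
proof (induction ts)
  case (Cons a ts)
  then show ?case
    by (cases a) auto
qed simp

lemma prod_list_trees: "f None = 1 \<Longrightarrow> (\<Prod>t\<leftarrow>ts. f t) = (\<Prod>t\<leftarrow>trees ts. f (Some t))"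
proof (induction ts)
  case (Cons a ts)
  then show ?case
    by (cases a) auto
qed simp

lemma finite_lists_filter_neq: "finite {xs. length xs = k \<and> filter (\<lambda>x. x \<noteq> z) xs = cs}"
proof (rule finite_subset)
  show "{xs. length xs = k \<and> filter (\<lambda>x. x \<noteq> z) xs = cs} \<subseteq>
      {xs. set xs \<subseteq> insert z (set cs) \<and> length xs = k}"
    by auto
qed (simp add: finite_lists_length_eq)

lemma card_lists_filter_neq:
  assumes "z \<notin> set cs"
  shows "card {xs. length xs = k \<and> filter (\<lambda>x. x \<noteq> z) xs = cs} = k choose length cs"
  using assms
proof (induction k arbitrary: cs)
  case 0
  have "{xs. length xs = 0 \<and> filter (\<lambda>x. x \<noteq> z) xs = cs} = (if cs = [] then {[]} else {})"
    by auto
  then show ?case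
    by simp
next
  case (Suc k)
  let ?A = "\<lambda>cs. {xs. length xs = k \<and> filter (\<lambda>x. x \<noteq> z) xs = cs}"
  show ?case
  proof (cases cs)
    case Nil
    then have "{xs. length xs = Suc k \<and> filter (\<lambda>x. x \<noteq> z) xs = cs} = Cons z ` ?A cs"
      by (auto simp: length_Suc_conv split: if_splits)
    with Suc Nil show ?thesis
      by (simp add: card_image)
  next
    case (Cons c cs')
    with Suc.prems have "{xs. length xs = Suc k \<and> filter (\<lambda>x. x \<noteq> z) xs = cs} =
        Cons z ` ?A cs \<union> Cons c ` ?A cs'"
      by (auto simp: length_Suc_conv split: if_splits)
    moreover have "Cons z ` ?A cs \<inter> Cons c ` ?A cs' = {}"
      using Cons Suc.prems by auto
    ultimately show ?thesis
      using Cons Suc by (simp add: card_Un_disjoint card_image finite_lists_filter_neq)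
  qed
qed

lemma card_lists_with_trees: "card {ts. length ts = k \<and> trees ts = cs} = k choose length cs"
proof -
  have "trees ts = cs \<longleftrightarrow> filter (\<lambda>t. t \<noteq> None) ts = map Some cs" for ts
    unfolding filter_neq_None by (simp add: inj_map_eq_map inj_def)
  then show ?thesis
    using card_lists_filter_neq[of None "map Some cs" k] by simp
qed

lemma finite_lists_with_trees: "finite {ts. length ts = k \<and> trees ts = cs}"
proof (rule finite_subset[OF _ finite_lists_length_eq[of "insert None (Some ` set cs)" k]])
  have "set ts \<subseteq> insert None (Some ` set (trees ts))" for ts
  proof (induction ts)
    case (Cons a ts)
    then show ?case
      by (cases a) auto
  qed simp
  then show "{ts. length ts = k \<and> trees ts = cs} \<subseteq>
      {ts. set ts \<subseteq> insert None (Some ` set cs) \<and> length ts = k}"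
    by blast
qed simp

lemma sum_lists_with_trees:
  assumes "f None = 1"
  shows "(\<Sum>ts\<in>{ts. length ts = k \<and> trees ts = cs}. prod_list (map f ts)) =
    of_nat (k choose length cs) * (\<Prod>c\<leftarrow>cs. f (Some c))"
proof -
  have "(\<Sum>ts\<in>{ts. length ts = k \<and> trees ts = cs}. prod_list (map f ts)) =
      (\<Sum>ts\<in>{ts. length ts = k \<and> trees ts = cs}. \<Prod>c\<leftarrow>cs. f (Some c))"
    using prod_list_trees[of f, OF assms] by (intro sum.cong) auto
  then show ?thesis
    by (simp add: card_lists_with_trees)
qed

section \<open>The \<open>k\<close>-ary exponential series\<close>

definition forests :: "nat \<Rightarrow> ptree option \<Rightarrow> ptree option list set" where
  "forests k T = {ts. length ts = k \<and> set ts \<subseteq> PT \<and> graft ts = T}"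

lemma prod_list_eq_prod_nth: "prod_list (map f xs) = (\<Prod>i<length xs. f (xs ! i))"
  by (induction xs) (simp_all add: prod.lessThan_Suc_shift del: prod.lessThan_Suc)

lemma omega_const_eq_sum_forests: "omega k (\<lambda>_. f) T = (\<Sum>ts\<in>forests k T. prod_list (map f ts))"
  unfolding omega_def forests_def by (rule sum.cong) (auto simp: prod_list_eq_prod_nth)

lemma omega_const_None:
  assumes "f None = 1"
  shows "omega k (\<lambda>_. f) None = 1"
proof -
  have "forests k None = {ts. length ts = k \<and> trees ts = []}"
    by (auto simp: forests_def graft_eq_None_iff set_subset_PT_iff)
  then show ?thesis
    using sum_lists_with_trees[of f k "[]", OF assms] by (simp add: omega_const_eq_sum_forests)
qed

text \<open>Grafting \<open>k\<close> series onto a new root produces \<open>Some t\<close> either from a single nonempty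
  argument \<open>Some t\<close>, or from the children of \<open>t\<close> in order.\<close>

lemma omega_const_Some:
  assumes "f None = 1" and "reduced t"
  shows "omega k (\<lambda>_. f) (Some t) = of_nat k * f (Some t) +
    (case t of Leaf \<Rightarrow> 0 | Node cs \<Rightarrow> of_nat (k choose length cs) * (\<Prod>c\<leftarrow>cs. f (Some c)))"
proof -
  let ?F = "\<lambda>cs. {ts. length ts = k \<and> trees ts = cs}"
  have single: "(\<Sum>ts\<in>?F [t]. prod_list (map f ts)) = of_nat k * f (Some t)"
    using sum_lists_with_trees[of f k "[t]", OF assms(1)] by simp
  show ?thesis
  proof (cases t)
    case Leaf
    then have "forests k (Some t) = ?F [t]"
      by (auto simp: forests_def graft_eq_Some_iff set_subset_PT_iff)
    with Leaf single show ?thesis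
      by (simp add: omega_const_eq_sum_forests)
  next
    case (Node cs)
    have "forests k (Some t) = ?F [t] \<union> ?F cs"
    proof (intro equalityI subsetI)
      fix ts
      assume "ts \<in> forests k (Some t)"
      with Node show "ts \<in> ?F [t] \<union> ?F cs"
        by (auto simp: forests_def graft_eq_Some_iff)
    next
      fix ts
      assume "ts \<in> ?F [t] \<union> ?F cs"
      with assms(2) Node show "ts \<in> forests k (Some t)"
        by (auto simp: forests_def set_subset_PT_iff graft_eq_Some_iff)
    qed
    moreover have "?F [t] \<inter> ?F cs = {}"
    proof -
      have "length cs \<noteq> length [t]"
        using assms(2) Node by simp
      then show ?thesis
        by fastforce
    qed
    ultimately show ?thesis
      using Node single sum_lists_with_trees[of f k cs, OF assms(1)]
      by (simp add: omega_const_eq_sum_forests sum.union_disjoint finite_lists_with_trees)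
  qed
qed

lemma of_nat_power_neq_self:
  assumes "2 \<le> k" and "2 \<le> N"
  shows "(of_nat k :: complex) ^ N \<noteq> of_nat k"
proof -
  have "k ^ 1 < k ^ N"
    using assms by (intro power_strict_increasing) auto
  then show ?thesis
    by (metis of_nat_eq_iff of_nat_power less_irrefl power_one_right)
qed

fun exp_coeff :: "nat \<Rightarrow> ptree \<Rightarrow> complex" where
  "exp_coeff k Leaf = 1"
| "exp_coeff k (Node cs) = of_nat (k choose length cs) / (of_nat k ^ nleaves (Node cs) - of_nat k) *
     (\<Prod>c\<leftarrow>cs. exp_coeff k c)"

definition exp_series :: "nat \<Rightarrow> series" where
  "exp_series k T = (case T of None \<Rightarrow> 1 | Some t \<Rightarrow> if reduced t then exp_coeff k t else 0)"

definition is_exp_series :: "nat \<Rightarrow> series \<Rightarrow> bool" where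
  "is_exp_series k f = ((\<forall>T. T \<notin> PT \<longrightarrow> f T = 0) \<and> f None = 1 \<and> f (Some Leaf) = 1 \<and>
     (\<forall>T\<in>PT. omega k (\<lambda>_. f) T = scale (of_nat k) f T))"

lemma omega_exp_series:
  assumes k: "2 \<le> k" and T: "T \<in> PT"
  shows "omega k (\<lambda>_. exp_series k) T = scale (of_nat k) (exp_series k) T"
proof (cases T)
  case None
  then show ?thesis
    using omega_const_None[of "exp_series k" k] by (simp add: exp_series_def scale_def)
next
  case (Some t)
  with T have t: "reduced t"
    by simp
  show ?thesis
  proof (cases t)
    case Leaf
    with Some show ?thesis
      using omega_const_Some[of "exp_series k" t k] by (simp add: exp_series_def scale_def)
  next
    case (Node cs)
    let ?n = "nleaves (Node cs)"
    have "(of_nat k :: complex) ^ ?n - of_nat k \<noteq> 0"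
      using of_nat_power_neq_self[OF k nleaves_Node_ge_2] t Node by simp
    moreover have "(\<Prod>c\<leftarrow>cs. exp_series k (Some c)) = (\<Prod>c\<leftarrow>cs. exp_coeff k c)"
      using t Node by (intro arg_cong[where f = prod_list] map_cong) (auto simp: exp_series_def)
    ultimately show ?thesis
      using Some Node t omega_const_Some[of "exp_series k" t k]
      by (simp add: exp_series_def scale_def field_simps)
  qed
qed

lemma is_exp_series_exp_series: "2 \<le> k \<Longrightarrow> is_exp_series k (exp_series k)"
  unfolding is_exp_series_def using omega_exp_series
  by (auto simp: exp_series_def PT_def split: option.split)

lemma is_exp_series_unique:
  assumes k: "2 \<le> k" and f: "is_exp_series k f"
  shows "f = exp_series k"
proof
  fix T
  have "f (Some t) = exp_coeff k t" if "reduced t" for t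
    using that
  proof (induction t)
    case Leaf
    then show ?case
      using f by (simp add: is_exp_series_def)
  next
    case (Node cs)
    let ?n = "nleaves (Node cs)"
    have "omega k (\<lambda>_. f) (Some (Node cs)) = of_nat k ^ ?n * f (Some (Node cs))"
      using f Node.prems by (simp add: is_exp_series_def scale_def)
    moreover have "(\<Prod>c\<leftarrow>cs. f (Some c)) = (\<Prod>c\<leftarrow>cs. exp_coeff k c)"
      using Node by (intro arg_cong[where f = prod_list] map_cong) auto
    moreover have "(of_nat k :: complex) ^ ?n - of_nat k \<noteq> 0"
      using of_nat_power_neq_self[OF k nleaves_Node_ge_2[OF Node.prems]] by simp
    ultimately show ?case
      using f Node.prems omega_const_Some[of f "Node cs" k]
      by (simp add: is_exp_series_def field_simps)
  qed
  then show "f T = exp_series k T"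
    using f by (cases T) (auto simp: is_exp_series_def exp_series_def)
qed

lemma exp_k_eq_exp_series:
  assumes "2 \<le> k"
  shows "exp_k k = exp_series k"
  unfolding exp_k_def is_exp_series_def[symmetric]
  using assms is_exp_series_exp_series is_exp_series_unique by blast

lemma is_exp_series_exp_k: "2 \<le> k \<Longrightarrow> is_exp_series k (exp_k k)"
  by (simp add: exp_k_eq_exp_series is_exp_series_exp_series)

section \<open>Series in \<open>x\<close> and \<open>y\<close>\<close>

text \<open>A series in \<open>x\<close> and an extra commuting variable \<open>y\<close>: \<open>H T m\<close> is the coefficient
  of \<open>x\<^sup>T y\<^sup>m\<close>.\<close>

type_synonym bseries = "ptree option \<Rightarrow> nat \<Rightarrow> complex"

definition weighted_forests :: "nat \<Rightarrow> ptree option \<Rightarrow> nat \<Rightarrow> (ptree option \<times> nat) list set" where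
  "weighted_forests k T m = {zs. length zs = k \<and> set (map fst zs) \<subseteq> PT \<and>
     graft (map fst zs) = T \<and> sum_list (map snd zs) = m}"

definition omega_y :: "nat \<Rightarrow> bseries \<Rightarrow> bseries" where
  "omega_y k H T m = (\<Sum>zs\<in>weighted_forests k T m. prod_list (map (case_prod H) zs))"

definition omega_y_fixed :: "nat \<Rightarrow> bseries \<Rightarrow> bool" where
  "omega_y_fixed k H \<longleftrightarrow> (\<forall>T\<in>PT. \<forall>m. omega_y k H T m = of_nat k ^ (deg T + m) * H T m)"

abbreviation weight :: "ptree option \<times> nat \<Rightarrow> nat" where
  "weight z \<equiv> deg (fst z) + snd z"

lemma sum_weight_weighted_forests:
  "zs \<in> weighted_forests k T m \<Longrightarrow> (\<Sum>z\<leftarrow>zs. weight z) = deg T + m"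
  by (auto simp: weighted_forests_def sum_list_addf deg_graft o_def)

lemma finite_weighted_forests: "finite (weighted_forests k T m)"
proof (rule finite_subset)
  let ?B = "{U \<in> PT. deg U \<le> deg T + m} \<times> {..deg T + m}"
  show "weighted_forests k T m \<subseteq> {zs. set zs \<subseteq> ?B \<and> length zs = k}"
  proof
    fix zs
    assume zs: "zs \<in> weighted_forests k T m"
    have "z \<in> ?B" if z: "z \<in> set zs" for z
    proof -
      have "weight z \<le> (\<Sum>z\<leftarrow>zs. weight z)"
        using z by (intro member_le_sum_list) auto
      moreover have "fst z \<in> PT"
        using zs z by (auto simp: weighted_forests_def)
      ultimately show ?thesis
        using sum_weight_weighted_forests[OF zs] by (cases z) simp
    qed
    with zs show "zs \<in> {zs. set zs \<subseteq> ?B \<and> length zs = k}"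
      by (auto simp: weighted_forests_def)
  qed
  show "finite {zs. set zs \<subseteq> ?B \<and> length zs = k}"
    by (intro finite_lists_length_eq finite_cartesian_product finite_PT_deg_le finite_atMost)
qed

text \<open>Entries \<open>(None, 0)\<close> stand for the constant term \<open>1\<close> and can be dropped.\<close>

abbreviation drop_units :: "(ptree option \<times> nat) list \<Rightarrow> (ptree option \<times> nat) list" where
  "drop_units zs \<equiv> filter (\<lambda>z. z \<noteq> (None, 0)) zs"

lemma graft_drop_units: "graft (map fst (drop_units zs)) = graft (map fst zs)"
proof (rule graft_cong)
  show "trees (map fst (drop_units zs)) = trees (map fst zs)"
  proof (induction zs)
    case (Cons z zs)
    then show ?case
      by (cases z; cases "fst z") auto
  qed simp
qed

lemma sum_snd_drop_units: "sum_list (map snd (drop_units zs)) = sum_list (map snd zs)"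
  by (induction zs) auto

lemma prod_drop_units:
  "H None 0 = 1 \<Longrightarrow> prod_list (map (case_prod H) (drop_units zs)) = prod_list (map (case_prod H) zs)"
  by (induction zs) auto

definition padded_singletons :: "nat \<Rightarrow> ptree option \<Rightarrow> nat \<Rightarrow> (ptree option \<times> nat) list set" where
  "padded_singletons k T m = {zs. length zs = k \<and> drop_units zs = [(T, m)]}"

lemma padded_singletons_subset:
  assumes "T \<in> PT"
  shows "padded_singletons k T m \<subseteq> weighted_forests k T m"
proof
  fix zs
  assume "zs \<in> padded_singletons k T m"
  then have drop: "drop_units zs = [(T, m)]" and "length zs = k"
    by (simp_all add: padded_singletons_def)
  moreover have "set (map fst zs) \<subseteq> PT"
  proof
    fix U
    assume "U \<in> set (map fst zs)"
    then obtain j where "(U, j) \<in> set zs"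
      by auto
    then have "(U, j) = (None, 0) \<or> (U, j) \<in> set (drop_units zs)"
      by auto
    with drop assms show "U \<in> PT"
      by auto
  qed
  ultimately show "zs \<in> weighted_forests k T m"
    using graft_drop_units[of zs] sum_snd_drop_units[of zs]
    by (simp add: weighted_forests_def)
qed

lemma card_padded_singletons:
  assumes "0 < deg T + m"
  shows "card (padded_singletons k T m) = k"
proof -
  have "(None, 0) \<notin> set [(T, m)]"
    using assms by auto
  from card_lists_filter_neq[OF this, of k] show ?thesis
    by (simp add: padded_singletons_def)
qed

lemma weight_less:
  assumes zs: "zs \<in> weighted_forests k T m" "zs \<notin> padded_singletons k T m"
    and z: "z \<in> set zs" and pos: "0 < deg T + m"
  shows "weight z < deg T + m"
proof (rule ccontr)
  assume not_less: "\<not> weight z < deg T + m"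
  obtain xs ys where zs_eq: "zs = xs @ z # ys"
    using z by (metis split_list)
  have "(\<Sum>x\<leftarrow>xs. weight x) + weight z + (\<Sum>y\<leftarrow>ys. weight y) = deg T + m"
    using sum_weight_weighted_forests[OF zs(1)] zs_eq by simp
  with not_less have "(\<Sum>x\<leftarrow>xs. weight x) = 0" "(\<Sum>y\<leftarrow>ys. weight y) = 0"
    by linarith+
  then have "\<forall>x\<in>set xs \<union> set ys. weight x = 0"
    by fastforce
  moreover have "\<forall>x\<in>set xs \<union> set ys. fst x \<in> PT"
    using zs(1) zs_eq by (auto simp: weighted_forests_def)
  ultimately have "\<forall>x\<in>set xs \<union> set ys. x = (None, 0)"
    using deg_eq_0_iff by (metis add_is_0 prod.collapse)
  moreover have "z \<noteq> (None, 0)"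
    using not_less pos by auto
  ultimately have drop: "drop_units zs = [z]"
    using zs_eq by (auto simp: filter_empty_conv)
  then have "z = (T, m)"
    using zs(1) graft_drop_units[of zs] sum_snd_drop_units[of zs]
    by (cases z) (simp add: weighted_forests_def)
  with drop zs show False
    by (simp add: padded_singletons_def weighted_forests_def)
qed

lemma omega_y_split:
  assumes "T \<in> PT" and "0 < deg T + m" and "H None 0 = 1"
  shows "omega_y k H T m = of_nat k * H T m +
    (\<Sum>zs\<in>weighted_forests k T m - padded_singletons k T m. prod_list (map (case_prod H) zs))"
proof -
  have "prod_list (map (case_prod H) zs) = H T m" if "zs \<in> padded_singletons k T m" for zs
  proof -
    have "prod_list (map (case_prod H) zs) = prod_list (map (case_prod H) (drop_units zs))"
      using prod_drop_units[of H, OF assms(3)] by simp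
    with that show ?thesis
      by (simp add: padded_singletons_def)
  qed
  then have singletons: "(\<Sum>zs\<in>padded_singletons k T m. prod_list (map (case_prod H) zs)) =
      of_nat k * H T m"
    by (simp add: card_padded_singletons[OF assms(2)])
  have "omega_y k H T m =
      (\<Sum>zs\<in>weighted_forests k T m - padded_singletons k T m. prod_list (map (case_prod H) zs)) +
      (\<Sum>zs\<in>padded_singletons k T m. prod_list (map (case_prod H) zs))"
    unfolding omega_y_def
    by (rule sum.subset_diff[OF padded_singletons_subset[OF assms(1)] finite_weighted_forests])
  then show ?thesis
    unfolding singletons by simp
qed

text \<open>Of the terms of \<open>\<omega>\<^sub>k(H, \<dots>, H)\<close> at \<open>x\<^sup>T y\<^sup>m\<close>, only the \<open>k\<close> padded singletons involve
  \<open>H T m\<close> itself, and \<open>k\<^sup>N \<noteq> k\<close> for \<open>N \<ge> 2\<close>.\<close>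

lemma omega_y_fixed_eq_step:
  assumes k: "2 \<le> k" and H: "omega_y_fixed k H" "H None 0 = 1"
    and H': "omega_y_fixed k H'" "H' None 0 = 1"
    and T: "T \<in> PT" and N: "2 \<le> deg T + m"
    and lower: "\<And>t j. t \<in> PT \<Longrightarrow> deg t + j < deg T + m \<Longrightarrow> H t j = H' t j"
  shows "H T m = H' T m"
proof -
  let ?R = "\<lambda>H. \<Sum>zs\<in>weighted_forests k T m - padded_singletons k T m.
    prod_list (map (case_prod H) zs)"
  have "?R H = ?R H'"
  proof (intro sum.cong arg_cong[where f = prod_list] map_cong refl)
    fix zs z
    assume zs: "zs \<in> weighted_forests k T m - padded_singletons k T m" and z: "z \<in> set zs"
    then have "fst z \<in> PT"
      by (auto simp: weighted_forests_def)
    moreover have "weight z < deg T + m"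
      using zs z N by (intro weight_less[of zs k T m z]) auto
    ultimately show "case_prod H z = case_prod H' z"
      using lower by (cases z) simp
  qed
  moreover have pos: "0 < deg T + m"
    using N by linarith
  have "of_nat k ^ (deg T + m) * H T m = of_nat k * H T m + ?R H"
    using H T omega_y_split[of T m H k, OF T pos H(2)] by (simp add: omega_y_fixed_def)
  moreover have "of_nat k ^ (deg T + m) * H' T m = of_nat k * H' T m + ?R H'"
    using H' T omega_y_split[of T m H' k, OF T pos H'(2)] by (simp add: omega_y_fixed_def)
  ultimately have "(of_nat k ^ (deg T + m) - of_nat k) * (H T m - H' T m) = 0"
    by (simp add: algebra_simps)
  then show ?thesis
    using of_nat_power_neq_self[OF k N] by simp
qed

theorem omega_y_fixed_unique:
  assumes k: "2 \<le> k" and H: "omega_y_fixed k H" "H None 0 = 1"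
    and H': "omega_y_fixed k H'" "H' None 0 = 1"
    and x: "H (Some Leaf) 0 = H' (Some Leaf) 0" and y: "H None 1 = H' None 1"
    and T: "T \<in> PT"
  shows "H T m = H' T m"
  using T
proof (induction "deg T + m" arbitrary: T m rule: less_induct)
  case less
  consider "deg T + m = 0" | "deg T + m = 1" | "2 \<le> deg T + m"
    by linarith
  then show ?case
  proof cases
    case 1
    then show ?thesis
      using H H' deg_eq_0_iff[OF less.prems] by simp
  next
    case 2
    then have "T = None \<and> m = 1 \<or> T = Some Leaf \<and> m = 0"
      using deg_eq_0_iff[OF less.prems] deg_eq_1_iff[OF less.prems] by auto
    then show ?thesis
      using x y by auto
  next
    case 3
    then show ?thesis
      using omega_y_fixed_eq_step[OF k H H' less.prems] less.hyps by blast
  qed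
qed

definition compositions :: "nat \<Rightarrow> nat \<Rightarrow> nat list set" where
  "compositions k m = {ms. length ms = k \<and> sum_list ms = m}"

lemma compositions_0: "compositions 0 m = (if m = 0 then {[]} else {})"
  by (auto simp: compositions_def)

lemma compositions_Suc:
  "compositions (Suc k) m = (\<lambda>(j, ms). j # ms) ` (SIGMA j:{..m}. compositions k (m - j))"
  by (force simp: compositions_def length_Suc_conv image_iff)

lemma finite_compositions: "finite (compositions k m)"
  by (induction k arbitrary: m) (simp_all add: compositions_0 compositions_Suc)

text \<open>The multinomial theorem for \<open>(1 + \<dots> + 1)\<^sup>m\<close> with \<open>k\<close> summands.\<close>

lemma sum_compositions_inverse_fact:
  "(\<Sum>ms\<in>compositions k m. \<Prod>j\<leftarrow>ms. 1 / fact j) = (of_nat k ^ m / fact m :: 'a :: field_char_0)"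
proof (induction k arbitrary: m)
  case 0
  then show ?case
    by (simp add: compositions_0)
next
  case (Suc k)
  have inj: "inj_on (\<lambda>(j, ms). j # ms) (SIGMA j:{..m}. compositions k (m - j))"
    by (auto simp: inj_on_def)
  have "(\<Sum>ms\<in>compositions (Suc k) m. \<Prod>j\<leftarrow>ms. 1 / fact j) =
      (\<Sum>(j, ms)\<in>(SIGMA j:{..m}. compositions k (m - j)). 1 / fact j * (\<Prod>i\<leftarrow>ms. 1 / fact i) :: 'a)"
    unfolding compositions_Suc by (subst sum.reindex[OF inj]) (simp add: case_prod_unfold)
  also have "\<dots> = (\<Sum>j\<le>m. 1 / fact j * (\<Sum>ms\<in>compositions k (m - j). \<Prod>i\<leftarrow>ms. 1 / fact i))"
    by (subst sum.Sigma[symmetric]) (auto simp: finite_compositions sum_distrib_left)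
  also have "\<dots> = (\<Sum>j\<le>m. of_nat (m choose j) * 1 ^ j * of_nat k ^ (m - j)) / fact m"
    unfolding Suc.IH sum_divide_distrib
    by (intro sum.cong) (simp_all add: binomial_fact field_simps)
  also have "\<dots> = of_nat (Suc k) ^ m / fact m"
    by (simp add: binomial_ring add.commute)
  finally show ?case .
qed

lemma weighted_forests_eq_zip:
  "weighted_forests k T m = (\<lambda>(ts, ms). zip ts ms) ` (forests k T \<times> compositions k m)"
proof
  show "weighted_forests k T m \<subseteq> (\<lambda>(ts, ms). zip ts ms) ` (forests k T \<times> compositions k m)"
  proof
    fix zs
    assume "zs \<in> weighted_forests k T m"
    then have "(map fst zs, map snd zs) \<in> forests k T \<times> compositions k m"
      by (auto simp: weighted_forests_def forests_def compositions_def)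
    moreover have "zs = (\<lambda>(ts, ms). zip ts ms) (map fst zs, map snd zs)"
      by (simp add: zip_map_fst_snd)
    ultimately show "zs \<in> (\<lambda>(ts, ms). zip ts ms) ` (forests k T \<times> compositions k m)"
      by (rule rev_image_eqI)
  qed
qed (auto simp: weighted_forests_def forests_def compositions_def dest: set_zip_leftD)

lemma inj_on_zip_forests_compositions:
  "inj_on (\<lambda>(ts, ms). zip ts ms) (forests k T \<times> compositions k m)"
  by (rule inj_onI) (auto simp: forests_def compositions_def, (metis map_fst_zip map_snd_zip)+)

lemma prod_list_zip_divide_fact:
  "length ts = length ms \<Longrightarrow>
    prod_list (map (\<lambda>(t, j). f t / fact j) (zip ts ms)) =
    prod_list (map f ts) * (\<Prod>j\<leftarrow>ms. 1 / fact j :: 'a :: field_char_0)"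
  by (induction ts ms rule: list_induct2) auto

text \<open>\<open>\<lambda>t j. f t / fact j\<close> is the series \<open>f(x) e\<^sup>y\<close>.\<close>

lemma omega_y_fixed_times_exp:
  assumes "\<forall>T\<in>PT. omega k (\<lambda>_. f) T = scale (of_nat k) f T"
  shows "omega_y_fixed k (\<lambda>t j. f t / fact j)"
  unfolding omega_y_fixed_def
proof (intro ballI allI)
  fix T m
  assume T: "T \<in> PT"
  have "omega_y k (\<lambda>t j. f t / fact j) T m =
      (\<Sum>(ts, ms)\<in>forests k T \<times> compositions k m. prod_list (map f ts) * (\<Prod>j\<leftarrow>ms. 1 / fact j))"
    unfolding omega_y_def weighted_forests_eq_zip
    by (subst sum.reindex[OF inj_on_zip_forests_compositions])
      (auto simp: forests_def compositions_def prod_list_zip_divide_fact intro!: sum.cong)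
  also have "\<dots> = (\<Sum>ts\<in>forests k T. prod_list (map f ts)) * (\<Sum>ms\<in>compositions k m. \<Prod>j\<leftarrow>ms. 1 / fact j)"
    by (simp add: sum_product sum.cartesian_product)
  also have "\<dots> = of_nat k ^ deg T * f T * (of_nat k ^ m / fact m)"
    using assms T by (simp add: omega_const_eq_sum_forests sum_compositions_inverse_fact scale_def)
  finally show "omega_y k (\<lambda>t j. f t / fact j) T m = of_nat k ^ (deg T + m) * (f T / fact m)"
    by (simp add: power_add)
qed

section \<open>Contraction of grafts\<close>

lemma leaves_list_Cons_ge: "x \<in> leaves_list i cs \<Longrightarrow> \<exists>j p. x = j # p \<and> i \<le> j"
  by (induction cs arbitrary: i) (auto, fastforce)

lemma finite_leaves: "finite (leaves t)" "finite (leaves_list i cs)"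
  by (induction t and i cs rule: leaves_leaves_list.induct) auto

lemma finite_L: "finite (L U)"
  by (cases U) (simp_all add: finite_leaves)

lemma restr_inter_leaves:
  "\<forall>I. restr t I = restr t (I \<inter> leaves t)"
  "\<forall>I. restr_list i cs I = restr_list i cs (I \<inter> leaves_list i cs)"
proof (induction t and i cs rule: leaves_leaves_list.induct)
  case (4 i c cs)
  show ?case
  proof
    fix I
    let ?J = "I \<inter> leaves_list i (c # cs)"
    have "{p. i # p \<in> ?J} \<inter> leaves c = {p. i # p \<in> I} \<inter> leaves c"
      by auto
    then have "restr c {p. i # p \<in> ?J} = restr c {p. i # p \<in> I}"
      using "4.IH"(1) by metis
    moreover have "?J \<inter> leaves_list (Suc i) cs = I \<inter> leaves_list (Suc i) cs"
      using leaves_list_Cons_ge[of _ "Suc i" cs] by auto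
    then have "restr_list (Suc i) cs ?J = restr_list (Suc i) cs I"
      using "4.IH"(2) by metis
    ultimately show "restr_list i (c # cs) I = restr_list i (c # cs) ?J"
      by simp
  qed
qed auto

lemma restr_in_PT:
  "reduced t \<longrightarrow> (\<forall>I. restr t I \<in> PT)"
  "(\<forall>c\<in>set cs. reduced c) \<longrightarrow> (\<forall>I. set (restr_list i cs I) \<subseteq> PT)"
  by (induction t and i cs rule: leaves_leaves_list.induct) (auto intro: graft_in_PT)

lemma deg_restr_le:
  "\<forall>I. deg (restr t I) \<le> nleaves t"
  "\<forall>I. (\<Sum>u\<leftarrow>restr_list i cs I. deg u) \<le> (\<Sum>c\<leftarrow>cs. nleaves c)"
  by (induction t and i cs rule: leaves_leaves_list.induct) (auto simp: deg_graft add_mono)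

lemma contract_in_PT: "U \<in> PT \<Longrightarrow> contract U I \<in> PT"
  using restr_in_PT(1) by (cases U) auto

lemma deg_contract_le: "deg (contract U I) \<le> deg U"
  using deg_restr_le(1) by (cases U) auto

abbreviation leaf_subsets :: "nat list set list \<Rightarrow> ptree option list \<Rightarrow> bool" where
  "leaf_subsets Is us \<equiv> list_all2 (\<lambda>I u. I \<subseteq> L u) Is us"

text \<open>The leaves of \<open>Node (trees us)\<close> are the paths \<open>i # p\<close>, where \<open>i\<close> counts only the
  nonempty entries of \<open>us\<close>; hence the index advances only at \<open>Some\<close> entries.\<close>

fun split_leaves :: "nat \<Rightarrow> ptree option list \<Rightarrow> nat list set \<Rightarrow> nat list set list" where
  "split_leaves i [] I = []"
| "split_leaves i (None # us) I = {} # split_leaves i us I"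
| "split_leaves i (Some t # us) I = {p \<in> leaves t. i # p \<in> I} # split_leaves (Suc i) us I"

fun join_leaves :: "nat \<Rightarrow> ptree option list \<Rightarrow> nat list set list \<Rightarrow> nat list set" where
  "join_leaves i [] Is = {}"
| "join_leaves i (None # us) Is = join_leaves i us (tl Is)"
| "join_leaves i (Some t # us) Is = Cons i ` hd Is \<union> join_leaves (Suc i) us (tl Is)"

lemma leaf_subsets_split_leaves: "leaf_subsets (split_leaves i us I) us"
proof (induction us arbitrary: i)
  case (Cons u us)
  then show ?case
    by (cases u) auto
qed simp

lemma join_split_leaves: "join_leaves i us (split_leaves i us I) = I \<inter> leaves_list i (trees us)"
proof (induction us arbitrary: i)
  case (Cons u us)
  then show ?case
    by (cases u) auto
qed simp

lemma join_leaves_subset: "leaf_subsets Is us \<Longrightarrow> join_leaves i us Is \<subseteq> leaves_list i (trees us)"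
proof (induction us arbitrary: i Is)
  case (Cons u us)
  then obtain J Is' where "Is = J # Is'" "J \<subseteq> L u" "leaf_subsets Is' us"
    by (auto simp: list_all2_Cons2)
  then show ?case
    using Cons.IH[of Is'] by (cases u) auto
qed simp

lemma split_leaves_cong:
  "(\<And>j p. i \<le> j \<Longrightarrow> j # p \<in> I \<longleftrightarrow> j # p \<in> I') \<Longrightarrow> split_leaves i us I = split_leaves i us I'"
proof (induction us arbitrary: i)
  case (Cons u us)
  show ?case
  proof (cases u)
    case (Some t)
    have "split_leaves (Suc i) us I = split_leaves (Suc i) us I'"
      using Cons by simp
    moreover have "{p \<in> leaves t. i # p \<in> I} = {p \<in> leaves t. i # p \<in> I'}"
      using Cons.prems by auto
    ultimately show ?thesis
      using Some by simp
  qed (use Cons in simp)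
qed simp

lemma split_join_leaves: "leaf_subsets Is us \<Longrightarrow> split_leaves i us (join_leaves i us Is) = Is"
proof (induction us arbitrary: i Is)
  case (Cons u us)
  then obtain J Is' where Is: "Is = J # Is'" "J \<subseteq> L u" "leaf_subsets Is' us"
    by (auto simp: list_all2_Cons2)
  show ?case
  proof (cases u)
    case None
    then show ?thesis
      using Is Cons.IH[of Is'] by simp
  next
    case (Some t)
    have "i # p \<notin> join_leaves (Suc i) us Is'" for p
      using join_leaves_subset[OF Is(3), of "Suc i"] leaves_list_Cons_ge[of "i # p" "Suc i"] by auto
    then have "{p \<in> leaves t. i # p \<in> Cons i ` J \<union> join_leaves (Suc i) us Is'} = J"
      using Is Some by auto
    moreover have "split_leaves (Suc i) us (Cons i ` J \<union> join_leaves (Suc i) us Is') =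
        split_leaves (Suc i) us (join_leaves (Suc i) us Is')"
      by (rule split_leaves_cong) auto
    ultimately show ?thesis
      using Is Some Cons.IH[of Is'] by simp
  qed
qed simp

lemma trees_contract_split_leaves:
  "trees (map2 contract us (split_leaves i us I)) = trees (restr_list i (trees us) I)"
proof (induction us arbitrary: i)
  case (Cons u us)
  show ?case
  proof (cases u)
    case (Some t)
    have "{p \<in> leaves t. i # p \<in> I} = {p. i # p \<in> I} \<inter> leaves t"
      by auto
    then have "restr t {p \<in> leaves t. i # p \<in> I} = restr t {p. i # p \<in> I}"
      using restr_inter_leaves(1)[of t] by simp
    then show ?thesis
      using Some Cons.IH[of "Suc i"] by (cases "restr t {p. i # p \<in> I}") simp_all
  qed (use Cons in simp)
qed simp

text \<open>If at most one entry of \<open>us\<close> is nonempty, the graft is that entry itself, whose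
  leaves are not relabelled.\<close>

definition graft_split :: "ptree option list \<Rightarrow> nat list set \<Rightarrow> nat list set list" where
  "graft_split us I = (if 2 \<le> length (trees us) then split_leaves 0 us I
     else map (\<lambda>u. if u = None then {} else I) us)"

definition graft_join :: "ptree option list \<Rightarrow> nat list set list \<Rightarrow> nat list set" where
  "graft_join us Is = (if 2 \<le> length (trees us) then join_leaves 0 us Is else \<Union> (set Is))"

lemma length_trees_eq_card: "length (trees us) = card {i. i < length us \<and> us ! i \<noteq> None}"
proof -
  have "length (trees us) = length (filter (\<lambda>u. u \<noteq> None) us)"
    unfolding filter_neq_None by simp
  then show ?thesis
    by (simp only: length_filter_conv_card)
qed

lemma graft_eq_if_unique_nonempty:
  assumes "\<not> 2 \<le> length (trees us)" and "u \<in> set us" and "u \<noteq> None"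
  shows "u = graft us"
proof -
  obtain t where u: "u = Some t"
    using assms(3) by auto
  with assms(2) have "t \<in> set (trees us)"
    by (simp add: Some_in_set_iff)
  with assms(1) have "trees us = [t]"
    by (cases "trees us" rule: remdups_adj.cases) auto
  with u show ?thesis
    by (simp add: graft_eq_trees)
qed

lemma nonempty_index_unique:
  assumes "\<not> 2 \<le> length (trees us)"
    and "i < length us" "us ! i \<noteq> None" "j < length us" "us ! j \<noteq> None"
  shows "i = j"
proof -
  have "card {i. i < length us \<and> us ! i \<noteq> None} \<le> Suc 0"
    using assms(1) by (simp add: length_trees_eq_card)
  with assms(2-) show ?thesis
    by (subst (asm) card_le_Suc0_iff_eq) auto
qed

lemma trees_map_if_None:
  "trees (map (\<lambda>u. if u = None then None else C) us) = concat (replicate (length (trees us)) (trees [C]))"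
proof (induction us)
  case (Cons a us)
  then show ?case
    by (cases a; cases C) auto
qed simp

lemma leaf_subsets_graft_split:
  assumes "I \<subseteq> L (graft us)"
  shows "leaf_subsets (graft_split us I) us"
proof (cases "2 \<le> length (trees us)")
  case True
  then show ?thesis
    by (simp add: graft_split_def leaf_subsets_split_leaves)
next
  case False
  have "(if u = None then {} else I) \<subseteq> L u" if "u \<in> set us" for u
    using assms graft_eq_if_unique_nonempty[OF False that] by auto
  with False show ?thesis
    by (simp add: graft_split_def list_all2_map1 list_all2_same)
qed

lemma graft_join_split:
  assumes "I \<subseteq> L (graft us)"
  shows "graft_join us (graft_split us I) = I"
proof (cases "2 \<le> length (trees us)")
  case True
  then show ?thesis
    using assms by (simp add: graft_split_def graft_join_def join_split_leaves graft_eq_Node Int_absorb2)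
next
  case small: False
  show ?thesis
  proof (cases "I = {}")
    case False
    with assms obtain t where "graft us = Some t"
      by fastforce
    with small have "trees us = [t]"
      by (auto simp: graft_eq_Some_iff)
    then have "Some t \<in> set us"
      by (simp add: Some_in_set_iff)
    with small show ?thesis
      by (auto simp: graft_join_def graft_split_def)
  qed (use small in \<open>auto simp: graft_join_def graft_split_def\<close>)
qed

lemma graft_join_subset:
  assumes "leaf_subsets Is us"
  shows "graft_join us Is \<subseteq> L (graft us)"
proof (cases "2 \<le> length (trees us)")
  case True
  then show ?thesis
    using join_leaves_subset[OF assms] by (simp add: graft_join_def graft_eq_Node)
next
  case False
  have "I \<subseteq> L (graft us)" if "I \<in> set Is" for I
  proof -
    obtain i where i: "i < length Is" "I = Is ! i"
      using \<open>I \<in> set Is\<close> by (metis in_set_conv_nth)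
    with assms have "I \<subseteq> L (us ! i)" "i < length us"
      by (auto simp: list_all2_conv_all_nth)
    then show ?thesis
      using graft_eq_if_unique_nonempty[OF False, of "us ! i"] by (cases "us ! i = None") auto
  qed
  with False show ?thesis
    by (auto simp: graft_join_def)
qed

lemma graft_split_join:
  assumes "leaf_subsets Is us"
  shows "graft_split us (graft_join us Is) = Is"
proof (cases "2 \<le> length (trees us)")
  case True
  then show ?thesis
    using split_join_leaves[OF assms] by (simp add: graft_split_def graft_join_def)
next
  case False
  have len: "length Is = length us"
    using assms by (simp add: list_all2_lengthD)
  have subset: "Is ! i \<subseteq> L (us ! i)" if "i < length us" for i
    using assms that by (simp add: list_all2_conv_all_nth)
  have "\<Union> (set Is) = Is ! i" if i: "i < length us" "us ! i \<noteq> None" for i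
  proof
    show "\<Union> (set Is) \<subseteq> Is ! i"
    proof
      fix x
      assume "x \<in> \<Union> (set Is)"
      then obtain j where j: "j < length Is" "x \<in> Is ! j"
        by (auto simp: in_set_conv_nth)
      have "us ! j \<noteq> None"
      proof
        assume "us ! j = None"
        with j len subset[of j] show False
          by auto
      qed
      with False i j len have "j = i"
        using nonempty_index_unique[of us j i] by simp
      with j show "x \<in> Is ! i"
        by simp
    qed
  qed (use i len in \<open>metis Union_upper nth_mem\<close>)
  moreover have "Is ! i = {}" if "i < length us" "us ! i = None" for i
    using subset[OF that(1)] that(2) by simp
  ultimately show ?thesis
    using False len by (intro nth_equalityI) (auto simp: graft_split_def graft_join_def)
qed

lemma contract_graft: "contract (graft us) I = graft (map2 contract us (graft_split us I))"
proof (cases "2 \<le> length (trees us)")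
  case True
  then have "contract (graft us) I = graft (restr_list 0 (trees us) I)"
    by (simp add: graft_eq_Node)
  also have "\<dots> = graft (map2 contract us (split_leaves 0 us I))"
    by (rule graft_cong) (simp add: trees_contract_split_leaves)
  finally show ?thesis
    using True by (simp add: graft_split_def)
next
  case False
  let ?C = "contract (graft us) I"
  have "map2 contract us (map (\<lambda>u. if u = None then {} else I) us) =
      map (\<lambda>u. contract u (if u = None then {} else I)) us"
    by (induction us) auto
  also have "\<dots> = map (\<lambda>u. if u = None then None else ?C) us"
    using graft_eq_if_unique_nonempty[OF False] by (intro map_cong) auto
  finally have "trees (map2 contract us (graft_split us I)) =
      concat (replicate (length (trees us)) (trees [?C]))"
    using False by (simp add: graft_split_def trees_map_if_None)
  then show ?thesis
  proof (cases "trees us")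
    case Nil
    then show ?thesis
      using \<open>trees (map2 contract us (graft_split us I)) = _\<close>
      by (simp add: graft_eq_None_iff[symmetric])
  next
    case (Cons t r)
    with False have "r = []"
      by (cases r) auto
    with Cons have "trees (map2 contract us (graft_split us I)) = trees [?C]"
      using \<open>trees (map2 contract us (graft_split us I)) = _\<close> by simp
    then show ?thesis
      by (metis graft_cong graft_singleton)
  qed
qed

lemma card_leaf_subsets_contract:
  "card {Is. leaf_subsets Is us \<and> graft (map2 contract us Is) = T} = pbinom (graft us) T"
proof -
  have "bij_betw (graft_split us) {I. I \<subseteq> L (graft us) \<and> contract (graft us) I = T}
      {Is. leaf_subsets Is us \<and> graft (map2 contract us Is) = T}"
  proof (rule bij_betw_byWitness[where f' = "graft_join us"])
    show "\<forall>I\<in>{I. I \<subseteq> L (graft us) \<and> contract (graft us) I = T}. graft_join us (graft_split us I) = I"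
      by (simp add: graft_join_split)
    show "\<forall>Is\<in>{Is. leaf_subsets Is us \<and> graft (map2 contract us Is) = T}.
        graft_split us (graft_join us Is) = Is"
      by (simp add: graft_split_join)
    show "graft_split us ` {I. I \<subseteq> L (graft us) \<and> contract (graft us) I = T}
        \<subseteq> {Is. leaf_subsets Is us \<and> graft (map2 contract us Is) = T}"
      by (auto simp: leaf_subsets_graft_split simp flip: contract_graft)
    show "graft_join us ` {Is. leaf_subsets Is us \<and> graft (map2 contract us Is) = T}
        \<subseteq> {I. I \<subseteq> L (graft us) \<and> contract (graft us) I = T}"
    proof (intro image_subsetI CollectI conjI)
      fix Is
      assume "Is \<in> {Is. leaf_subsets Is us \<and> graft (map2 contract us Is) = T}"
      then show "graft_join us Is \<subseteq> L (graft us)" "contract (graft us) (graft_join us Is) = T"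
        by (simp_all add: graft_join_subset contract_graft graft_split_join)
    qed
  qed
  then show ?thesis
    unfolding pbinom_def by (simp add: bij_betw_same_card)
qed

section \<open>The series \<open>exp\<^sub>k(x + y)\<close>\<close>

lemma finite_lists_all2:
  assumes "\<forall>z\<in>set zs. finite (B z)"
  shows "finite {ps. list_all2 (\<lambda>p z. p \<in> B z) ps zs}"
proof (rule finite_subset)
  show "{ps. list_all2 (\<lambda>p z. p \<in> B z) ps zs} \<subseteq>
      {ps. set ps \<subseteq> \<Union> (B ` set zs) \<and> length ps = length zs}"
    by (auto simp: list_all2_conv_all_nth in_set_conv_nth) (metis nth_mem)
qed (use assms in \<open>simp add: finite_lists_length_eq\<close>)

lemma prod_list_sum_eq_sum_lists:
  fixes g :: "'a \<Rightarrow> 'c :: comm_semiring_1"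
  assumes "\<forall>z\<in>set zs. finite (B z)"
  shows "(\<Prod>z\<leftarrow>zs. \<Sum>p\<in>B z. g p) = (\<Sum>ps\<in>{ps. list_all2 (\<lambda>p z. p \<in> B z) ps zs}. \<Prod>p\<leftarrow>ps. g p)"
  using assms
proof (induction zs)
  case Nil
  have "{ps. list_all2 (\<lambda>p z. p \<in> B z) ps []} = {[]}"
    by auto
  then show ?case
    by simp
next
  case (Cons z zs)
  let ?S = "{ps. list_all2 (\<lambda>p z. p \<in> B z) ps zs}"
  have eq: "{ps. list_all2 (\<lambda>p z. p \<in> B z) ps (z # zs)} = (\<lambda>(p, ps). p # ps) ` (B z \<times> ?S)"
    by (auto simp: list_all2_Cons2 image_iff)
  have inj: "inj_on (\<lambda>(p, ps). p # ps) (B z \<times> ?S)"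
    by (auto simp: inj_on_def)
  have "(\<Sum>ps\<in>{ps. list_all2 (\<lambda>p z. p \<in> B z) ps (z # zs)}. \<Prod>p\<leftarrow>ps. g p) =
      (\<Sum>(p, ps)\<in>B z \<times> ?S. g p * (\<Prod>p\<leftarrow>ps. g p))"
    unfolding eq by (subst sum.reindex[OF inj]) (simp add: case_prod_unfold)
  also have "\<dots> = (\<Sum>p\<in>B z. g p) * (\<Sum>ps\<in>?S. \<Prod>p\<leftarrow>ps. g p)"
    by (simp add: sum_product sum.cartesian_product)
  finally show ?case
    using Cons by simp
qed

text \<open>Coefficients of \<open>exp\<^sub>k(x + y)\<close>.\<close>

definition exp_k_plus_y :: "nat \<Rightarrow> bseries" where
  "exp_k_plus_y k T m = (\<Sum>U\<in>{U\<in>PT. deg U = deg T + m}. of_nat (pbinom U T) * exp_k k U)"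

definition is_selection :: "ptree option \<times> nat list set \<Rightarrow> bool" where
  "is_selection p \<longleftrightarrow> fst p \<in> PT \<and> snd p \<subseteq> L (fst p)"

definition selection_index :: "ptree option \<times> nat list set \<Rightarrow> ptree option \<times> nat" where
  "selection_index p = (case_prod contract p, deg (fst p) - deg (case_prod contract p))"

definition leaf_selections :: "ptree option \<times> nat \<Rightarrow> (ptree option \<times> nat list set) set" where
  "leaf_selections z = {p. is_selection p \<and> selection_index p = z}"

lemma leaf_selections_eq_Sigma:
  "leaf_selections (t, j) = Sigma {U\<in>PT. deg U = deg t + j} (\<lambda>U. {I. I \<subseteq> L U \<and> contract U I = t})"
  using deg_contract_le by (fastforce simp: leaf_selections_def is_selection_def selection_index_def)

lemma finite_contractions_to: "finite {I. I \<subseteq> L U \<and> contract U I = t}"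
  by (rule finite_subset[of _ "Pow (L U)"]) (auto simp: finite_L)

lemma finite_leaf_selections: "finite (leaf_selections z)"
  by (cases z) (simp add: leaf_selections_eq_Sigma finite_PT_deg_eq finite_contractions_to)

lemma exp_k_plus_y_eq_sum_selections:
  "exp_k_plus_y k t j = (\<Sum>p\<in>leaf_selections (t, j). exp_k k (fst p))"
proof -
  have "exp_k_plus_y k t j =
      (\<Sum>U\<in>{U\<in>PT. deg U = deg t + j}. \<Sum>I\<in>{I. I \<subseteq> L U \<and> contract U I = t}. exp_k k U)"
    by (simp add: exp_k_plus_y_def pbinom_def)
  also have "\<dots> = (\<Sum>(U, I)\<in>Sigma {U\<in>PT. deg U = deg t + j} (\<lambda>U. {I. I \<subseteq> L U \<and> contract U I = t}).
      exp_k k U)"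
    by (rule sum.Sigma) (simp_all add: finite_PT_deg_eq finite_contractions_to)
  finally show ?thesis
    by (simp add: leaf_selections_eq_Sigma case_prod_unfold)
qed

lemma list_all2_leaf_selections_iff:
  "list_all2 (\<lambda>p z. p \<in> leaf_selections z) ps zs \<longleftrightarrow>
    (\<forall>p\<in>set ps. is_selection p) \<and> zs = map selection_index ps"
  by (induction ps arbitrary: zs) (auto simp: list_all2_Cons1 leaf_selections_def)

definition selection_lists :: "nat \<Rightarrow> ptree option \<Rightarrow> nat \<Rightarrow> (ptree option \<times> nat list set) list set" where
  "selection_lists k T m = {ps. length ps = k \<and> (\<forall>p\<in>set ps. is_selection p) \<and>
     graft (map (case_prod contract) ps) = T \<and> deg (graft (map fst ps)) = deg T + m}"

lemma sum_list_diff_nat: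
  "(\<forall>x\<in>set xs. g x \<le> (f x :: nat)) \<Longrightarrow>
    (\<Sum>x\<leftarrow>xs. f x - g x) = (\<Sum>x\<leftarrow>xs. f x) - (\<Sum>x\<leftarrow>xs. g x) \<and> (\<Sum>x\<leftarrow>xs. g x) \<le> (\<Sum>x\<leftarrow>xs. f x)"
  by (induction xs) auto

lemma selection_index_in_weighted_forests_iff:
  assumes "\<forall>p\<in>set ps. is_selection p"
  shows "map selection_index ps \<in> weighted_forests k T m \<longleftrightarrow> ps \<in> selection_lists k T m"
proof -
  let ?c = "case_prod contract"
  have "\<forall>p\<in>set ps. deg (?c p) \<le> deg (fst p)"
    using deg_contract_le by (auto split: prod.split)
  from sum_list_diff_nat[OF this]
  have "(\<Sum>p\<leftarrow>ps. deg (fst p) - deg (?c p)) = (\<Sum>p\<leftarrow>ps. deg (fst p)) - (\<Sum>p\<leftarrow>ps. deg (?c p))"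
    and "(\<Sum>p\<leftarrow>ps. deg (?c p)) \<le> (\<Sum>p\<leftarrow>ps. deg (fst p))"
    by simp_all
  moreover have "set (map ?c ps) \<subseteq> PT"
    using assms contract_in_PT by (auto simp: is_selection_def)
  ultimately show ?thesis
    using assms
    by (auto simp: weighted_forests_def selection_lists_def selection_index_def deg_graft o_def)
qed

lemma mem_selection_lists_iff:
  "ps \<in> selection_lists k T m \<longleftrightarrow>
    (\<forall>p\<in>set ps. is_selection p) \<and> map selection_index ps \<in> weighted_forests k T m"
  using selection_index_in_weighted_forests_iff[of ps k T m] by (auto simp: selection_lists_def)

definition forests_of_deg :: "nat \<Rightarrow> nat \<Rightarrow> ptree option list set" where
  "forests_of_deg k N = {us. length us = k \<and> set us \<subseteq> PT \<and> deg (graft us) = N}"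

lemma finite_forests_of_deg: "finite (forests_of_deg k N)"
proof (rule finite_subset)
  show "forests_of_deg k N \<subseteq> {us. set us \<subseteq> {U\<in>PT. deg U \<le> N} \<and> length us = k}"
  proof safe
    fix us u
    assume "us \<in> forests_of_deg k N" "u \<in> set us"
    moreover have "deg u \<le> (\<Sum>u\<leftarrow>us. deg u)" if "u \<in> set us"
      using that by (intro member_le_sum_list) auto
    ultimately show "u \<in> PT" "deg u \<le> N"
      by (auto simp: forests_of_deg_def deg_graft)
  qed (simp add: forests_of_deg_def)
qed (intro finite_lists_length_eq finite_PT_deg_le)

lemma card_selection_lists_fiber:
  assumes us: "us \<in> forests_of_deg k (deg T + m)"
  shows "card {ps \<in> selection_lists k T m. map fst ps = us} = pbinom (graft us) T"
proof -
  have "bij_betw (map snd) {ps \<in> selection_lists k T m. map fst ps = us}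
      {Is. leaf_subsets Is us \<and> graft (map2 contract us Is) = T}"
  proof (rule bij_betw_byWitness[where f' = "zip us"])
    show "\<forall>ps\<in>{ps \<in> selection_lists k T m. map fst ps = us}. zip us (map snd ps) = ps"
      by (auto simp: zip_map_fst_snd)
    show "\<forall>Is\<in>{Is. leaf_subsets Is us \<and> graft (map2 contract us Is) = T}. map snd (zip us Is) = Is"
      by (auto simp: list_all2_lengthD)
    show "map snd ` {ps \<in> selection_lists k T m. map fst ps = us}
        \<subseteq> {Is. leaf_subsets Is us \<and> graft (map2 contract us Is) = T}"
      by (auto simp: selection_lists_def is_selection_def zip_map_fst_snd
          list_all2_map1 list_all2_map2 list_all2_same)
    show "zip us ` {Is. leaf_subsets Is us \<and> graft (map2 contract us Is) = T}
        \<subseteq> {ps \<in> selection_lists k T m. map fst ps = us}"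
    proof (rule image_subsetI)
      fix Is
      assume Is: "Is \<in> {Is. leaf_subsets Is us \<and> graft (map2 contract us Is) = T}"
      then have len: "length Is = length us"
        by (auto dest: list_all2_lengthD)
      have "is_selection p" if "p \<in> set (zip us Is)" for p
        using that Is us nth_mem[of _ us]
        by (fastforce simp: set_zip is_selection_def forests_of_deg_def list_all2_conv_all_nth)
      with Is us len show "zip us Is \<in> {ps \<in> selection_lists k T m. map fst ps = us}"
        by (auto simp: selection_lists_def forests_of_deg_def)
    qed
  qed
  then show ?thesis
    using card_leaf_subsets_contract by (simp add: bij_betw_same_card)
qed

lemma finite_selection_lists: "finite (selection_lists k T m)"
proof -
  have "selection_lists k T m = (\<Union>zs\<in>weighted_forests k T m.
      {ps. list_all2 (\<lambda>p z. p \<in> leaf_selections z) ps zs})"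
    by (auto simp: list_all2_leaf_selections_iff mem_selection_lists_iff)
  then show ?thesis
    by (simp add: finite_weighted_forests finite_lists_all2 finite_leaf_selections)
qed

lemma omega_y_exp_k_plus_y_eq_sum_selection_lists:
  "omega_y k (exp_k_plus_y k) T m = (\<Sum>ps\<in>selection_lists k T m. \<Prod>p\<leftarrow>ps. exp_k k (fst p))"
proof -
  let ?h = "\<lambda>ps. \<Prod>p\<leftarrow>ps. exp_k k (fst p)"
  let ?sel = "\<lambda>zs. {ps. list_all2 (\<lambda>p z. p \<in> leaf_selections z) ps zs}"
  have "omega_y k (exp_k_plus_y k) T m = (\<Sum>zs\<in>weighted_forests k T m. \<Sum>ps\<in>?sel zs. ?h ps)"
    unfolding omega_y_def
    by (intro sum.cong refl)
      (simp add: exp_k_plus_y_eq_sum_selections prod_list_sum_eq_sum_lists finite_leaf_selections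
        case_prod_unfold)
  also have "\<dots> = (\<Sum>zs\<in>weighted_forests k T m.
      \<Sum>ps\<in>{ps \<in> selection_lists k T m. map selection_index ps = zs}. ?h ps)"
    by (intro sum.cong refl arg_cong[where f = "sum ?h"])
      (auto simp: list_all2_leaf_selections_iff mem_selection_lists_iff)
  also have "\<dots> = (\<Sum>ps\<in>selection_lists k T m. ?h ps)"
    by (rule sum.group[OF finite_selection_lists finite_weighted_forests])
      (auto simp: mem_selection_lists_iff)
  finally show ?thesis .
qed

lemma omega_y_exp_k_plus_y:
  "omega_y k (exp_k_plus_y k) T m =
    (\<Sum>us\<in>forests_of_deg k (deg T + m). of_nat (pbinom (graft us) T) * (\<Prod>u\<leftarrow>us. exp_k k u))"
proof -
  let ?h = "\<lambda>ps. \<Prod>p\<leftarrow>ps. exp_k k (fst p)"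
  let ?fiber = "\<lambda>us. {ps \<in> selection_lists k T m. map fst ps = us}"
  have "omega_y k (exp_k_plus_y k) T m = (\<Sum>us\<in>forests_of_deg k (deg T + m). \<Sum>ps\<in>?fiber us. ?h ps)"
    unfolding omega_y_exp_k_plus_y_eq_sum_selection_lists
    by (rule sum.group[symmetric, OF finite_selection_lists finite_forests_of_deg])
      (auto simp: selection_lists_def forests_of_deg_def is_selection_def)
  also have "\<dots> = (\<Sum>us\<in>forests_of_deg k (deg T + m). \<Sum>ps\<in>?fiber us. \<Prod>u\<leftarrow>us. exp_k k u)"
    by (intro sum.cong refl) (auto simp: comp_def)
  finally show ?thesis
    by (simp add: card_selection_lists_fiber)
qed

lemma omega_exp_k:
  assumes "2 \<le> k" and "U \<in> PT"
  shows "omega k (\<lambda>_. exp_k k) U = of_nat k ^ deg U * exp_k k U"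
  using is_exp_series_exp_k[OF assms(1)] assms(2) by (simp add: is_exp_series_def scale_def)

lemma scaled_exp_k_plus_y:
  assumes "2 \<le> k"
  shows "of_nat k ^ (deg T + m) * exp_k_plus_y k T m =
    (\<Sum>us\<in>forests_of_deg k (deg T + m). of_nat (pbinom (graft us) T) * (\<Prod>u\<leftarrow>us. exp_k k u))"
proof -
  let ?N = "deg T + m"
  let ?f = "\<lambda>us. of_nat (pbinom (graft us) T) * (\<Prod>u\<leftarrow>us. exp_k k u)"
  have "of_nat k ^ ?N * exp_k_plus_y k T m =
      (\<Sum>U\<in>{U\<in>PT. deg U = ?N}. of_nat (pbinom U T) * omega k (\<lambda>_. exp_k k) U)"
    unfolding exp_k_plus_y_def sum_distrib_left
    by (intro sum.cong refl) (simp add: omega_exp_k[OF assms])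
  also have "\<dots> = (\<Sum>U\<in>{U\<in>PT. deg U = ?N}. \<Sum>us\<in>{us \<in> forests_of_deg k ?N. graft us = U}. ?f us)"
  proof (intro sum.cong refl)
    fix U
    assume "U \<in> {U\<in>PT. deg U = ?N}"
    then have "forests k U = {us \<in> forests_of_deg k ?N. graft us = U}"
      by (auto simp: forests_def forests_of_deg_def)
    then show "of_nat (pbinom U T) * omega k (\<lambda>_. exp_k k) U =
        (\<Sum>us\<in>{us \<in> forests_of_deg k ?N. graft us = U}. ?f us)"
      unfolding omega_const_eq_sum_forests sum_distrib_left by (intro sum.cong) auto
  qed
  also have "\<dots> = (\<Sum>us\<in>forests_of_deg k ?N. ?f us)"
    by (rule sum.group[OF finite_forests_of_deg finite_PT_deg_eq])
      (auto simp: forests_of_deg_def graft_in_PT)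
  finally show ?thesis .
qed

lemma omega_y_fixed_exp_k_plus_y: "2 \<le> k \<Longrightarrow> omega_y_fixed k (exp_k_plus_y k)"
  by (simp add: omega_y_fixed_def omega_y_exp_k_plus_y scaled_exp_k_plus_y)

lemma exp_k_plus_y_initial:
  assumes "2 \<le> k"
  shows "exp_k_plus_y k None 0 = 1" "exp_k_plus_y k (Some Leaf) 0 = 1" "exp_k_plus_y k None 1 = 1"
proof -
  have exp: "exp_k k None = 1" "exp_k k (Some Leaf) = 1"
    using is_exp_series_exp_k[OF assms] by (simp_all add: is_exp_series_def)
  have deg_0: "{U\<in>PT. deg U = 0} = {None}" and deg_1: "{U\<in>PT. deg U = 1} = {Some Leaf}"
    using deg_eq_0_iff deg_eq_1_iff by auto
  have "{I. I \<subseteq> L None \<and> contract None I = None} = {{}}"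
    and "{I. I \<subseteq> L (Some Leaf) \<and> contract (Some Leaf) I = Some Leaf} = {{[]}}"
    and "{I. I \<subseteq> L (Some Leaf) \<and> contract (Some Leaf) I = None} = {{}}"
    by auto
  then have "pbinom None None = 1" "pbinom (Some Leaf) (Some Leaf) = 1" "pbinom (Some Leaf) None = 1"
    by (simp_all add: pbinom_def)
  with exp deg_0 deg_1 show
    "exp_k_plus_y k None 0 = 1" "exp_k_plus_y k (Some Leaf) 0 = 1" "exp_k_plus_y k None 1 = 1"
    by (simp_all add: exp_k_plus_y_def)
qed

theorem corollary4p3:
  fixes k n m :: nat and T :: "ptree option"
  assumes "2 \<le> k" and "T \<in> PT" and "deg T = n"
  shows "exp_k k T / fact m =
    (\<Sum>U\<in>{U\<in>PT. deg U = n + m}. of_nat (pbinom U T) * exp_k k U)"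
proof -
  have exp: "is_exp_series k (exp_k k)"
    by (rule is_exp_series_exp_k[OF assms(1)])
  have "exp_k k T / fact m = exp_k_plus_y k T m"
  proof (rule omega_y_fixed_unique[where H = "\<lambda>t j. exp_k k t / fact j", OF assms(1)])
    show "omega_y_fixed k (\<lambda>t j. exp_k k t / fact j)"
      using exp by (intro omega_y_fixed_times_exp) (simp add: is_exp_series_def)
  qed (use exp exp_k_plus_y_initial[OF assms(1)] omega_y_fixed_exp_k_plus_y[OF assms(1)] assms(2)
      in \<open>simp_all add: is_exp_series_def\<close>)
  with assms(3) show ?thesis
    by (simp add: exp_k_plus_y_def)
qed

end
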